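(* Let $N_1\ge N_2$, $N_3$, $T$ be nonnegative integers with $T\ge N_1+N_3$. For $i\in\{1,2\}$ let $\tilde T_i$ be a maximizer over $T'\in\{N_i,\dots,T-N_3\}$ of $\min\left(\frac{T'+1-N_i}{T'+1},\frac{T-T'+1-N_3}{T-T'+1}\right)$. For all positive integers $A,B$, set $$k_1=A(T-\tilde T_1+1-N_3)(\tilde T_1+1-N_1),\quad k_2=B(T-\tilde T_2+1-N_3)(\tilde T_2+1-N_2),$$ $$n=\max\Big(A(\tilde T_1+1)(T-\tilde T_1+1-N_3),\;B(\tilde T_2+1)(T-\tilde T_2+1-N_3),\;A(T-\tilde T_1+1)(\tilde T_1+1-N_1)+B(T-\tilde T_2+1)(\tilde T_2+1-N_2)\Big).$$ Then the rate pair $(R_1,R_2)=(k_1/n,\,k_2/n)$ is achievable.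
   Context: Network: two sources, one relay, one destination; no direct source–destination link. Source $i\in\{1,2\}$ has messages $s_{t,i}\in\mathbb{F}^{k_i}$, $t\ge0$, over a finite field $\mathbb{F}$. A time-invariant $(n_1,n_2,n_3,k_1,k_2,T)_{\mathbb{F}}$ streaming code (unbounded memory): source $i$ sends at time $t$ a packet $x^{(1)}_{t,i}\in\mathbb{F}^{n_i}$, a fixed function of $s_{0,i},\dots,s_{t,i}$; a relay function $g$, the same at every time $t$, takes the packets received from both sources at times $t-T,\dots,t$ together with the relay's previously produced estimates of past source messages, and outputs a packet $x^{(2)}_t\in\mathbb{F}^{n_3}$ and estimates of $s_{t-T,1},s_{t-T,2}$; the destination outputs at time $t+T$ estimates $\hat s_{t,i}$ from its received packets up to time $t+T$. Each link is a packet erasure channel (received packet is the sent one or the erasure symbol $*$). An $N$-erasure sequence has exactly $N$ erased times; link source $i\to$relay suffers an arbitrary $N_i$-erasure sequence, relay$\to$destination an arbitrary $N_3$-erasure sequence. The code is $(N_1,N_2,N_3)$-achievable if $\hat s_{t,i}=s_{t,i}$ always. Rate pair: $R_i=k_i/n$, $n=\max(n_1,n_2,n_3)$; a rate pair is achievable if it is the rate pair of some $(N_1,N_2,N_3)$-achievable code (over some finite field). *)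

theory Defs
  imports "HOL-Algebra.Ring" Complex_Main
begin

text \<open>Symbols of the finite field F are elements of carrier F, where F :: nat ring
  (every finite field is isomorphic to one whose carrier is a set of naturals).
  A received packet is an option: None is the erasure symbol *.\<close>

type_synonym vec = "nat list"
type_synonym rx = "vec option"

definition vecs :: "nat ring \<Rightarrow> nat \<Rightarrow> vec set" where
  "vecs F k = {v. length v = k \<and> set v \<subseteq> carrier F}"

text \<open>Relay function g: input = window of packets received from (source 1, source 2) at
  times t-T,...,t (entry None stands for a time before 0, i.e. nonexistent),
  and the list of the relay's previous estimates (of s_{0}, ..., s_{t-1-T});
  output = (relay packet x^(2)_t, estimate of s_{t-T,1}, estimate of s_{t-T,2}).\<close>

type_synonym relay_fn = "(rx \<times> rx) option list \<Rightarrow> (vec \<times> vec) list \<Rightarrow> vec \<times> vec \<times> vec"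

primrec relay_hist :: "relay_fn \<Rightarrow> nat \<Rightarrow> (nat \<Rightarrow> (rx \<times> rx) option list) \<Rightarrow> nat
    \<Rightarrow> (vec \<times> vec \<times> vec) list" where
  "relay_hist g T W 0 = []"
| "relay_hist g T W (Suc t) =
     relay_hist g T W t @ [g (W t) (map snd (drop T (relay_hist g T W t)))]"

definition src_rx :: "(vec list \<Rightarrow> vec) \<Rightarrow> (nat \<Rightarrow> vec) \<Rightarrow> nat set \<Rightarrow> nat \<Rightarrow> rx" where
  "src_rx enc s E tau = (if tau \<in> E then None else Some (enc (map s [0..<Suc tau])))"

definition relay_window :: "nat \<Rightarrow> (nat \<Rightarrow> rx) \<Rightarrow> (nat \<Rightarrow> rx) \<Rightarrow> nat \<Rightarrow> (rx \<times> rx) option list" where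
  "relay_window T y1 y2 t =
     map (\<lambda>j. if T \<le> t + j then Some (y1 (t + j - T), y2 (t + j - T)) else None) [0..<Suc T]"

definition achievable_code ::
  "nat ring \<Rightarrow> nat \<Rightarrow> nat \<Rightarrow> nat \<Rightarrow> nat \<Rightarrow> nat \<Rightarrow> nat \<Rightarrow>
   (vec list \<Rightarrow> vec) \<Rightarrow> (vec list \<Rightarrow> vec) \<Rightarrow> relay_fn \<Rightarrow> (rx list \<Rightarrow> vec \<times> vec) \<Rightarrow>
   nat \<Rightarrow> nat \<Rightarrow> nat \<Rightarrow> bool" where
  "achievable_code F n1 n2 n3 k1 k2 T enc1 enc2 g dec N1 N2 N3 \<longleftrightarrow>
     (\<forall>ms. enc1 ms \<in> vecs F n1) \<and> (\<forall>ms. enc2 ms \<in> vecs F n2) \<and>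
     (\<forall>w es. fst (g w es) \<in> vecs F n3) \<and>
     (\<forall>s1 s2 E1 E2 E3.
        (\<forall>t. s1 t \<in> vecs F k1) \<longrightarrow> (\<forall>t. s2 t \<in> vecs F k2) \<longrightarrow>
        finite E1 \<longrightarrow> card E1 = N1 \<longrightarrow> finite E2 \<longrightarrow> card E2 = N2 \<longrightarrow>
        finite E3 \<longrightarrow> card E3 = N3 \<longrightarrow>
        (let W = relay_window T (src_rx enc1 s1 E1) (src_rx enc2 s2 E2);
             x2 = (\<lambda>tau. fst (relay_hist g T W (Suc tau) ! tau));
             y = (\<lambda>tau. if tau \<in> E3 then None else Some (x2 tau))
         in \<forall>t. dec (map y [0..<Suc (t + T)]) = (s1 t, s2 t)))"

definition achievable_rate_pair :: "nat \<Rightarrow> nat \<Rightarrow> nat \<Rightarrow> nat \<Rightarrow> real \<Rightarrow> real \<Rightarrow> bool" where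
  "achievable_rate_pair N1 N2 N3 T R1 R2 \<longleftrightarrow>
     (\<exists>(F :: nat ring) n1 n2 n3 k1 k2 enc1 enc2 g dec.
        field F \<and> finite (carrier F) \<and>
        achievable_code F n1 n2 n3 k1 k2 T enc1 enc2 g dec N1 N2 N3 \<and>
        R1 = real k1 / real (max n1 (max n2 n3)) \<and>
        R2 = real k2 / real (max n1 (max n2 n3)))"

definition tobj :: "nat \<Rightarrow> nat \<Rightarrow> nat \<Rightarrow> nat \<Rightarrow> real" where
  "tobj T N N3 T' = min ((real T' + 1 - real N) / (real T' + 1))
                        ((real T - real T' + 1 - real N3) / (real T - real T' + 1))"

definition is_tmax :: "nat \<Rightarrow> nat \<Rightarrow> nat \<Rightarrow> nat \<Rightarrow> bool" where
  "is_tmax T N N3 Tt \<longleftrightarrow> Tt \<in> {N..T - N3} \<and> (\<forall>T'\<in>{N..T - N3}. tobj T N N3 T' \<le> tobj T N N3 Tt)"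

end

theory Submission
  imports Defs "HOL-Algebra.QuotRing" "HOL-Number_Theory.Residues" "HOL-Computational_Algebra.Polynomial"
begin

text \<open>Symbol-wise decode-and-forward. Split the delay as T = a + b. Each message of a source is
  protected by an MDS code of length a + 1 and dimension a + 1 - N_i whose blocks are spread
  diagonally over the source packets of times t, ..., t + a; at most N_i of these are erased,
  so the relay recovers the message at time t + a. The relay re-encodes it with an MDS code of
  length b + 1 and dimension b + 1 - N_3 spread over its packets of times t + a, ..., t + T, so
  the destination recovers it by the deadline t + T. Working over vectors lets both codes carry the
  same message: for the message size A (b + 1 - N_3) (a + 1 - N_1) the blocks have length
  A (b + 1 - N_3) on the first hop and A (a + 1 - N_1) on the second, and the relay
  concatenates the streams of the two sources. The MDS codes are Reed--Solomon codes over GF(p)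
  for a prime p > T.\<close>

definition zmod_ring :: "nat \<Rightarrow> nat ring" where
  "zmod_ring p = \<lparr>carrier = {..<p}, monoid.mult = (\<lambda>x y. x * y mod p), one = 1, zero = 0,
     add = (\<lambda>x y. (x + y) mod p)\<rparr>"

lemma vecs_zmod_ring: "vecs (zmod_ring p) k = {v. length v = k \<and> set v \<subseteq> {..<p}}"
  by (simp add: vecs_def zmod_ring_def)

lemma field_zmod_ring:
  assumes "prime p"
  shows "field (zmod_ring p)"
proof -
  have "field (residue_ring (int p))"
    using assms residues_prime.is_field[of p] by (simp add: residues_prime_def)
  moreover have "nat \<in> ring_iso (residue_ring (int p)) (zmod_ring p)"
  proof (rule ring_iso_memI)
    show "bij_betw nat (carrier (residue_ring (int p))) (carrier (zmod_ring p))"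
      by (rule bij_betwI[where g = int]) (auto simp: residue_ring_def zmod_ring_def)
  qed (auto simp: residue_ring_def zmod_ring_def nat_mod_distrib nat_mult_distrib nat_add_distrib)
  ultimately show ?thesis
    using field.ring_iso_imp_img_field by (fastforce simp: residue_ring_def zmod_ring_def)
qed

lemma dvd_coeff_mult:
  fixes p :: "'a :: comm_semiring_1"
  assumes "\<forall>j. p dvd coeff R j"
  shows "p dvd coeff (Q * R) i"
  unfolding coeff_mult using assms by (simp add: dvd_sum)

lemma prime_dvd_coeff_if_roots_mod:
  fixes p :: int and Q :: "int poly"
  assumes "prime p" and "finite X" and "degree Q < card X"
    and incongruent: "\<forall>x\<in>X. \<forall>y\<in>X. p dvd (x - y) \<longrightarrow> x = y"
    and roots: "\<forall>x\<in>X. p dvd poly Q x"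
  shows "p dvd coeff Q i"
proof -
  have "X \<noteq> {}" using assms(3) by auto
  from assms(2) this assms(3-5) show ?thesis
  proof (induction X arbitrary: Q i rule: finite_ne_induct)
    case (singleton x)
    then have "degree Q = 0" by simp
    then have "Q = [:coeff Q 0:]" by (simp add: degree_0_id)
    then have "poly Q x = coeff Q 0" by (metis poly_pCons poly_0 mult_zero_right add_0_right)
    then show ?case
      using singleton.prems(3) \<open>degree Q = 0\<close> by (cases i) (simp_all add: coeff_eq_0)
  next
    case (insert x0 X)
    define R where "R = synthetic_div Q x0"
    have Q: "Q = [:-x0, 1:] * R + [:poly Q x0:]"
      unfolding R_def by (rule synthetic_div_correct'[symmetric])
    have "p dvd poly R x" if x: "x \<in> X" for x
    proof -
      have "(x - x0) * poly R x = poly Q x - poly Q x0"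
        by (subst (1) Q) (simp add: algebra_simps)
      then have "p dvd (x - x0) * poly R x"
        using insert.prems(3) x by (simp add: dvd_diff)
      moreover have "\<not> p dvd (x - x0)"
      proof
        assume "p dvd (x - x0)"
        then have "x = x0" using insert.prems(2) x by simp
        then show False using insert.hyps x by simp
      qed
      ultimately show ?thesis using \<open>prime p\<close> prime_dvd_mult_iff by blast
    qed
    moreover have "degree R < card X"
      using insert.prems(1) insert.hyps card_gt_0_iff[of X] by (simp add: R_def degree_synthetic_div)
    moreover have "\<forall>x\<in>X. \<forall>y\<in>X. p dvd (x - y) \<longrightarrow> x = y"
      using insert.prems(2) by simp
    ultimately have "\<forall>j. p dvd coeff R j" using insert.IH by blast
    then have "p dvd coeff ([:-x0, 1:] * R) i" by (rule dvd_coeff_mult)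
    moreover have "p dvd coeff [:poly Q x0:] i"
      using insert.prems(3) by (cases i) auto
    ultimately show ?case
      by (subst Q) (simp only: coeff_add dvd_add)
  qed
qed

definition rs_encode :: "nat \<Rightarrow> nat \<Rightarrow> vec \<Rightarrow> vec" where
  "rs_encode p n c = map (\<lambda>x. poly (Poly c) x mod p) [0..<n]"

lemma int_poly_Poly: "int (poly (Poly c) x) = poly (Poly (map int c)) (int x)"
  by (induction c) simp_all

lemma degree_Poly_less: "xs \<noteq> [] \<Longrightarrow> degree (Poly xs) < length xs"
proof -
  assume "xs \<noteq> []"
  have "degree (Poly xs) \<le> length xs - 1" by (rule degree_le) (auto simp: nth_default_def)
  then show ?thesis using \<open>xs \<noteq> []\<close> by (cases xs) auto
qed

lemma rs_encode_eq_imp_eq: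
  assumes "prime p" and "n \<le> p" and "length c = k" and "length d = k"
    and "set c \<subseteq> {..<p}" and "set d \<subseteq> {..<p}"
    and "S \<subseteq> {..<n}" and "k \<le> card S"
    and agree: "\<forall>j\<in>S. rs_encode p n c ! j = rs_encode p n d ! j"
  shows "c = d"
proof (cases "k = 0")
  case False
  define Q where "Q = Poly (map int c) - Poly (map int d)"
  have "finite S" using assms(7) finite_subset by blast
  have "c \<noteq> []" "d \<noteq> []" using False assms(3,4) by auto
  then have "degree (Poly (map int c)) < k" "degree (Poly (map int d)) < k"
    using assms(3,4) degree_Poly_less[of "map int c"] degree_Poly_less[of "map int d"] by auto
  then have "degree Q < k"
    unfolding Q_def using degree_diff_le_max le_less_trans max_less_iff_conj by blast
  moreover have "int p dvd poly Q x" if "x \<in> int ` S" for x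
  proof -
    obtain j where j: "j \<in> S" "x = int j" using \<open>x \<in> int ` S\<close> by blast
    have "poly (Poly c) j mod p = poly (Poly d) j mod p"
      using agree[rule_format, OF j(1)] j(1) assms(7) by (auto simp: rs_encode_def)
    then show ?thesis
      unfolding Q_def j(2)
      by (simp add: int_poly_Poly[symmetric] cong_iff_dvd_diff[symmetric] cong_def flip: of_nat_mod)
  qed
  moreover have "x = y" if "x \<in> int ` S" "y \<in> int ` S" "int p dvd (x - y)" for x y
  proof -
    from that(1,2) obtain i j where ij: "i \<in> S" "j \<in> S" "x = int i" "y = int j" by blast
    then have "[i = j] (mod p)"
      using that(3) by (simp add: cong_iff_dvd_diff[symmetric] cong_int_iff)
    then show ?thesis using ij assms(2,7) cong_less_modulus_unique_nat by fastforce
  qed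
  ultimately have dvd: "int p dvd coeff Q i" for i
    using prime_dvd_coeff_if_roots_mod[of "int p" "int ` S" Q] assms(1,8) \<open>finite S\<close>
    by (simp add: card_image)
  show ?thesis
  proof (rule nth_equalityI)
    fix i assume "i < length c"
    then have "c ! i < p" "d ! i < p"
      using assms(3-6) by (metis lessThan_iff nth_mem subsetD)+
    moreover have "coeff Q i = int (c ! i) - int (d ! i)"
      using \<open>i < length c\<close> assms(3,4) by (simp add: Q_def nth_default_def)
    then have "[c ! i = d ! i] (mod p)"
      using dvd[of i] by (simp add: cong_iff_dvd_diff[symmetric] cong_int_iff)
    ultimately show "c ! i = d ! i" using cong_less_modulus_unique_nat by blast
  qed (use assms(3,4) in simp)
qed (use assms(3,4) in simp)

definition block :: "nat \<Rightarrow> nat \<Rightarrow> 'a list \<Rightarrow> 'a list" where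
  "block w l xs = take w (drop (l * w) xs)"

lemma length_block: "(l + 1) * w \<le> length xs \<Longrightarrow> length (block w l xs) = w"
  by (simp add: block_def)

lemma nth_block: "i < w \<Longrightarrow> l * w + i < length xs \<Longrightarrow> block w l xs ! i = xs ! (l * w + i)"
  by (simp add: block_def)

lemma block_concat:
  assumes "\<forall>x\<in>set xs. length x = w" and "l < length xs"
  shows "block w l (concat xs) = xs ! l"
  using assms
proof (induction xs arbitrary: l)
  case (Cons x xs)
  then show ?case by (cases l) (simp_all add: block_def add.commute)
qed simp

lemma block_append:
  assumes "length xs = Suc b * w" and "l \<le> b"
  shows "block w l (xs @ ys) = block w l xs"
proof -
  have "(l + 1) * w \<le> length xs" using assms mult_le_mono1[of "l + 1" "Suc b" w] by simp
  then show ?thesis by (simp add: block_def)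
qed

lemma concat_in_vecs:
  "\<forall>x\<in>set xs. x \<in> vecs F w \<Longrightarrow> length xs = n \<Longrightarrow> concat xs \<in> vecs F (n * w)"
  by (induction xs arbitrary: n) (auto simp: vecs_def)

lemma append_in_vecs: "xs \<in> vecs F m \<Longrightarrow> ys \<in> vecs F n \<Longrightarrow> xs @ ys \<in> vecs F (m + n)"
  by (auto simp: vecs_def)

text \<open>An MDS code of length n and dimension k over vectors of length m: the message, of length
  k m, is cut into m chunks, each chunk is Reed--Solomon encoded, and codeword block j collects the
  j-th symbols of all m codewords.\<close>

definition mds_encode :: "nat \<Rightarrow> nat \<Rightarrow> nat \<Rightarrow> nat \<Rightarrow> vec \<Rightarrow> vec list" where
  "mds_encode p n m k c = map (\<lambda>j. map (\<lambda>r. rs_encode p n (block k r c) ! j) [0..<m]) [0..<n]"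

lemma length_mds_encode_nth [simp]: "j < n \<Longrightarrow> length (mds_encode p n m k c ! j) = m"
  by (simp add: mds_encode_def)

lemma mds_encode_in_vecs:
  "0 < p \<Longrightarrow> j < n \<Longrightarrow> mds_encode p n m k c ! j \<in> vecs (zmod_ring p) m"
  by (auto simp: mds_encode_def rs_encode_def vecs_zmod_ring)

lemma mds_encode_eq_imp_eq:
  assumes "prime p" and "n \<le> p" and "length c = k * m" and "length d = k * m"
    and "set c \<subseteq> {..<p}" and "set d \<subseteq> {..<p}"
    and "S \<subseteq> {..<n}" and "k \<le> card S"
    and agree: "\<forall>j\<in>S. mds_encode p n m k c ! j = mds_encode p n m k d ! j"
  shows "c = d"
proof (rule nth_equalityI)
  have chunk: "block k r c = block k r d" if "r < m" for r
  proof (rule rs_encode_eq_imp_eq[OF assms(1,2) _ _ _ _ assms(7,8)])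
    have "(r + 1) * k \<le> k * m" using that mult_le_mono2[of "Suc r" m k] by (simp add: mult.commute)
    then show "length (block k r c) = k" "length (block k r d) = k"
      using assms(3,4) by (simp_all add: length_block)
    show "set (block k r c) \<subseteq> {..<p}" "set (block k r d) \<subseteq> {..<p}"
      using assms(5,6) set_take_subset set_drop_subset unfolding block_def by fast+
    show "\<forall>j\<in>S. rs_encode p n (block k r c) ! j = rs_encode p n (block k r d) ! j"
    proof
      fix j assume "j \<in> S"
      then have "mds_encode p n m k c ! j ! r = mds_encode p n m k d ! j ! r" using agree by simp
      then show "rs_encode p n (block k r c) ! j = rs_encode p n (block k r d) ! j"
        using \<open>j \<in> S\<close> assms(7) that by (auto simp: mds_encode_def)
    qed
  qed
  show "length c = length d" using assms(3,4) by simp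
  fix i assume "i < length c"
  then have "0 < k" using assms(3) by (cases k) auto
  then have "i div k < m" "i div k * k + i mod k < length c"
    using \<open>i < length c\<close> assms(3) by (auto simp: less_mult_imp_div_less mult.commute)
  then show "c ! i = d ! i"
    using chunk[of "i div k"] nth_block[of "i mod k" k "i div k" c] nth_block[of "i mod k" k "i div k" d]
      assms(3,4) \<open>0 < k\<close> by simp
qed

lemma card_unerased_window:
  assumes "finite E"
  shows "n \<le> card {j. j < n \<and> u + j \<notin> E} + card E"
proof -
  have "card {j. j < n \<and> u + j \<in> E} \<le> card E"
    by (rule card_inj_on_le[where f = "\<lambda>j. u + j", OF _ _ assms]) (auto simp: inj_on_def)
  moreover have "{..<n} = {j. j < n \<and> u + j \<notin> E} \<union> {j. j < n \<and> u + j \<in> E}" by auto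
  then have "n \<le> card {j. j < n \<and> u + j \<notin> E} + card {j. j < n \<and> u + j \<in> E}"
    by (metis card_Un_le card_lessThan)
  ultimately show ?thesis by linarith
qed

text \<open>Decoding picks any message consistent with the unerased blocks; it is the right one as soon
  as k blocks survive, by mds_encode_eq_imp_eq.\<close>

definition mds_decode :: "nat \<Rightarrow> nat \<Rightarrow> nat \<Rightarrow> nat \<Rightarrow> vec option list \<Rightarrow> vec" where
  "mds_decode p n m k rs = (SOME c. length c = k * m \<and> set c \<subseteq> {..<p} \<and>
     (\<forall>j<n. \<forall>x. rs ! j = Some x \<longrightarrow> x = mds_encode p n m k c ! j))"

lemma mds_decode_window:
  assumes "prime p" and "n \<le> p" and "length c = k * m" and "set c \<subseteq> {..<p}"
    and "finite E" and "k + card E \<le> n"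
  shows "mds_decode p n m k
     (map (\<lambda>j. if u + j \<in> E then None else Some (mds_encode p n m k c ! j)) [0..<n]) = c"
    (is "mds_decode p n m k ?rs = c")
proof -
  let ?consistent = "\<lambda>c. length c = k * m \<and> set c \<subseteq> {..<p} \<and>
     (\<forall>j<n. \<forall>x. ?rs ! j = Some x \<longrightarrow> x = mds_encode p n m k c ! j)"
  have "?consistent c" using assms(3,4) by auto
  then have d: "?consistent (mds_decode p n m k ?rs)"
    unfolding mds_decode_def by (rule someI)
  show ?thesis
  proof (rule mds_encode_eq_imp_eq[OF assms(1,2) _ assms(3) _ assms(4)])
    show "{j. j < n \<and> u + j \<notin> E} \<subseteq> {..<n}" by auto
    show "k \<le> card {j. j < n \<and> u + j \<notin> E}"
      using card_unerased_window[OF assms(5), of n u] assms(6) by linarith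
  qed (use d in auto)
qed

text \<open>The packet of a source at time \<tau> carries block j of the codeword of its message of time
  \<tau> - j, for j \<le> a. For j > \<tau> the index length ms - Suc j truncates to 0 and the block is
  filler that is never decoded.\<close>

definition source_encode :: "nat \<Rightarrow> nat \<Rightarrow> nat \<Rightarrow> nat \<Rightarrow> vec list \<Rightarrow> vec" where
  "source_encode p a w k ms =
     concat (map (\<lambda>j. mds_encode p (Suc a) w k (ms ! (length ms - Suc j)) ! j) [0..<Suc a])"

lemma source_encode_in_vecs: "0 < p \<Longrightarrow> source_encode p a w k ms \<in> vecs (zmod_ring p) (Suc a * w)"
  unfolding source_encode_def by (rule concat_in_vecs) (auto simp: mds_encode_in_vecs)

lemma block_source_encode:
  "l \<le> a \<Longrightarrow>
    block w l (source_encode p a w k ms) = mds_encode p (Suc a) w k (ms ! (length ms - Suc l)) ! l"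
  unfolding source_encode_def by (subst block_concat) (auto simp del: upt_Suc)

text \<open>Entry j of the relay's window at time t holds the packets received at time t - (a + b) + j.
  Block i of the relay packet re-encodes the message of time t - a - i, decoded from block l of
  the packets of times t - a - i + l, l \<le> a; sel picks the packet of the relayed source.\<close>

definition relay_block ::
  "nat \<Rightarrow> nat \<Rightarrow> nat \<Rightarrow> nat \<Rightarrow> nat \<Rightarrow> nat \<Rightarrow> nat \<Rightarrow> (rx \<times> rx \<Rightarrow> rx) \<Rightarrow> (rx \<times> rx) option list
    \<Rightarrow> nat \<Rightarrow> vec" where
  "relay_block p a b w kA v kB sel W i =
     mds_encode p (Suc b) v kB (mds_decode p (Suc a) w kA
       (map (\<lambda>l. Option.bind (W ! (b - i + l)) (\<lambda>y. map_option (block w l) (sel y))) [0..<Suc a])) ! i"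

definition relay_encode ::
  "nat \<Rightarrow> nat \<Rightarrow> nat \<Rightarrow> nat \<Rightarrow> nat \<Rightarrow> nat \<Rightarrow> nat \<Rightarrow> (rx \<times> rx \<Rightarrow> rx) \<Rightarrow> (rx \<times> rx) option list
    \<Rightarrow> vec" where
  "relay_encode p a b w kA v kB sel W = concat (map (relay_block p a b w kA v kB sel W) [0..<Suc b])"

lemma relay_encode_in_vecs:
  "0 < p \<Longrightarrow> relay_encode p a b w kA v kB sel W \<in> vecs (zmod_ring p) (Suc b * v)"
  unfolding relay_encode_def by (rule concat_in_vecs) (auto simp: relay_block_def mds_encode_in_vecs)

lemma block_relay_encode:
  "i \<le> b \<Longrightarrow> block v i (relay_encode p a b w kA v kB sel W) = relay_block p a b w kA v kB sel W i"
  unfolding relay_encode_def by (subst block_concat) (auto simp: relay_block_def simp del: upt_Suc)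

lemma relay_window_nth:
  "j \<le> T \<Longrightarrow>
    relay_window T y1 y2 t ! j = (if T \<le> t + j then Some (y1 (t + j - T), y2 (t + j - T)) else None)"
  unfolding relay_window_def by (simp del: upt_Suc)

lemma relay_block_correct:
  assumes "prime p" and "a < p" and s: "\<forall>\<tau>. s \<tau> \<in> vecs (zmod_ring p) (kA * w)"
    and "finite E" and "kA + card E \<le> Suc a"
    and sel: "\<forall>\<tau>. sel (y \<tau>, y' \<tau>) = src_rx (source_encode p a w kA) s E \<tau>"
    and "i \<le> b" and "a + i \<le> t"
  shows "relay_block p a b w kA v kB sel (relay_window (a + b) y y' t) i =
    mds_encode p (Suc b) v kB (s (t - a - i)) ! i"
proof -
  define u where "u = t - a - i"
  have "map (\<lambda>l. Option.bind (relay_window (a + b) y y' t ! (b - i + l))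
        (\<lambda>y. map_option (block w l) (sel y))) [0..<Suc a] =
      map (\<lambda>l. if u + l \<in> E then None else Some (mds_encode p (Suc a) w kA (s u) ! l)) [0..<Suc a]"
  proof (rule map_cong[OF refl])
    fix l assume "l \<in> set [0..<Suc a]"
    then have "b - i + l \<le> a + b" "a + b \<le> t + (b - i + l)" "t + (b - i + l) - (a + b) = u + l"
      using assms(7,8) unfolding u_def by auto
    then have "relay_window (a + b) y y' t ! (b - i + l) = Some (y (u + l), y' (u + l))"
      by (simp add: relay_window_nth)
    moreover have "block w l (source_encode p a w kA (map s [0..<Suc (u + l)])) =
        mds_encode p (Suc a) w kA (s u) ! l"
      using \<open>l \<in> set [0..<Suc a]\<close> by (simp add: block_source_encode del: upt_Suc)
    ultimately show "Option.bind (relay_window (a + b) y y' t ! (b - i + l))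
        (\<lambda>y. map_option (block w l) (sel y)) =
      (if u + l \<in> E then None else Some (mds_encode p (Suc a) w kA (s u) ! l))"
      using sel by (simp add: src_rx_def del: upt_Suc)
  qed
  moreover have "mds_decode p (Suc a) w kA
      (map (\<lambda>l. if u + l \<in> E then None else Some (mds_encode p (Suc a) w kA (s u) ! l)) [0..<Suc a])
      = s u"
    using mds_decode_window[OF assms(1) _ _ _ assms(4)] assms(2,5) s
    by (simp add: vecs_zmod_ring del: upt_Suc)
  ultimately have "relay_block p a b w kA v kB sel (relay_window (a + b) y y' t) i =
      mds_encode p (Suc b) v kB (s u) ! i"
    unfolding relay_block_def by (simp only:)
  then show ?thesis unfolding u_def .
qed

text \<open>At the deadline of the message of time t the destination has received t + (a + b) + 1
  packets; block i of the packet of time t + a + i, read at offset off, relays that message.\<close>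

definition dest_decode :: "nat \<Rightarrow> nat \<Rightarrow> nat \<Rightarrow> nat \<Rightarrow> nat \<Rightarrow> nat \<Rightarrow> rx list \<Rightarrow> vec" where
  "dest_decode p a b v kB off ys = mds_decode p (Suc b) v kB
     (map (\<lambda>i. map_option (\<lambda>x. block v i (drop off x)) (ys ! (length ys - Suc (a + b) + a + i)))
       [0..<Suc b])"

lemma dest_decode_correct:
  assumes "prime p" and "b < p" and c: "c \<in> vecs (zmod_ring p) (kB * v)"
    and "finite E" and "kB + card E \<le> Suc b"
    and x: "\<forall>i \<le> b. block v i (drop off (x (t + a + i))) = mds_encode p (Suc b) v kB c ! i"
  shows "dest_decode p a b v kB off
    (map (\<lambda>\<tau>. if \<tau> \<in> E then None else Some (x \<tau>)) [0..<Suc (t + (a + b))]) = c"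
proof -
  have "dest_decode p a b v kB off
      (map (\<lambda>\<tau>. if \<tau> \<in> E then None else Some (x \<tau>)) [0..<Suc (t + (a + b))]) =
    mds_decode p (Suc b) v kB
      (map (\<lambda>i. if t + a + i \<in> E then None else Some (mds_encode p (Suc b) v kB c ! i)) [0..<Suc b])"
    unfolding dest_decode_def using x
    by (intro arg_cong[where f = "mds_decode p (Suc b) v kB"]) (auto simp: add.assoc simp del: upt_Suc)
  also have "\<dots> = c"
    using mds_decode_window[OF assms(1) _ _ _ assms(4)] assms(2,5) c
    by (simp add: vecs_zmod_ring del: upt_Suc)
  finally show ?thesis .
qed

lemma decode_and_forward_correct:
  assumes "prime p" and "T < p" and "a + b = T"
    and s: "\<forall>\<tau>. s \<tau> \<in> vecs (zmod_ring p) K" and "K = kA * w" and "K = kB * v"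
    and "finite E" and "kA + card E \<le> Suc a" and "finite E'" and "kB + card E' \<le> Suc b"
    and "\<forall>\<tau>. sel (y \<tau>, y' \<tau>) = src_rx (source_encode p a w kA) s E \<tau>"
    and x: "\<forall>\<tau>. \<forall>i \<le> b. block v i (drop off (x \<tau>)) =
      relay_block p a b w kA v kB sel (relay_window T y y' \<tau>) i"
  shows "dest_decode p a b v kB off
    (map (\<lambda>\<tau>. if \<tau> \<in> E' then None else Some (x \<tau>)) [0..<Suc (t + T)]) = s t"
  unfolding \<open>a + b = T\<close>[symmetric]
proof (rule dest_decode_correct[OF assms(1) _ _ assms(9,10)])
  have "a < p" "b < p" using assms(2,3) by auto
  then show "b < p" by simp
  show "s t \<in> vecs (zmod_ring p) (kB * v)" using s assms(6) by simp
  show "\<forall>i \<le> b. block v i (drop off (x (t + a + i))) = mds_encode p (Suc b) v kB (s t) ! i"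
    using x relay_block_correct[where b = b, OF assms(1) \<open>a < p\<close> _ assms(7,8,11), unfolded assms(3)]
      s assms(5)
    by simp
qed

lemma length_relay_hist: "length (relay_hist g T W t) = t"
  by (induction t) auto

lemma relay_hist_nth: "relay_hist g T W (Suc t) ! t = g (W t) (map snd (drop T (relay_hist g T W t)))"
  by (simp add: nth_append length_relay_hist)

text \<open>The relay's estimates of past messages are not constrained by achievable_code, so they
  are left empty.\<close>

lemma achievable_code_decode_and_forward:
  assumes "prime p" and "T < p"
    and "a + b = T" and "K = kA * w" and "K = kB * v" and "kA + N1 \<le> Suc a" and "kB + N3 \<le> Suc b"
    and "a' + b' = T" and "K' = kA' * w'" and "K' = kB' * v'" and "kA' + N2 \<le> Suc a'"
    and "kB' + N3 \<le> Suc b'"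
  shows "achievable_code (zmod_ring p) (Suc a * w) (Suc a' * w') (Suc b * v + Suc b' * v') K K' T
    (source_encode p a w kA) (source_encode p a' w' kA')
    (\<lambda>W _. (relay_encode p a b w kA v kB fst W @ relay_encode p a' b' w' kA' v' kB' snd W, [], []))
    (\<lambda>ys. (dest_decode p a b v kB 0 ys, dest_decode p a' b' v' kB' (Suc b * v) ys))
    N1 N2 N3"
    (is "achievable_code _ _ _ _ _ _ _ ?enc ?enc' ?g ?dec _ _ _")
proof -
  have "0 < p" using assms(1) prime_gt_0_nat by blast
  let ?R = "relay_encode p a b w kA v kB fst" and ?R' = "relay_encode p a' b' w' kA' v' kB' snd"
  have R: "length (?R W) = Suc b * v" for W
    using relay_encode_in_vecs[OF \<open>0 < p\<close>] by (simp add: vecs_def)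
  have "?dec (map (\<lambda>\<tau>. if \<tau> \<in> E3 then None
      else Some (fst (relay_hist ?g T (relay_window T (src_rx ?enc s E1) (src_rx ?enc' s' E2)) (Suc \<tau>) ! \<tau>)))
      [0..<Suc (t + T)]) = (s t, s' t)"
    if "\<forall>t. s t \<in> vecs (zmod_ring p) K" and "\<forall>t. s' t \<in> vecs (zmod_ring p) K'"
      and "finite E1" "card E1 = N1" "finite E2" "card E2 = N2" "finite E3" "card E3 = N3"
    for s s' E1 E2 E3 t
  proof -
    let ?W = "relay_window T (src_rx ?enc s E1) (src_rx ?enc' s' E2)"
    have "fst (relay_hist ?g T ?W (Suc \<tau>) ! \<tau>) = ?R (?W \<tau>) @ ?R' (?W \<tau>)" for \<tau>
      unfolding relay_hist_nth by simp
    moreover have "dest_decode p a b v kB 0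
        (map (\<lambda>\<tau>. if \<tau> \<in> E3 then None else Some (?R (?W \<tau>) @ ?R' (?W \<tau>))) [0..<Suc (t + T)]) = s t"
      by (rule decode_and_forward_correct[where sel = fst and E = E1
          and y = "src_rx ?enc s E1" and y' = "src_rx ?enc' s' E2"])
        (use assms that block_relay_encode block_append[OF R] in auto)
    moreover have "dest_decode p a' b' v' kB' (Suc b * v)
        (map (\<lambda>\<tau>. if \<tau> \<in> E3 then None else Some (?R (?W \<tau>) @ ?R' (?W \<tau>))) [0..<Suc (t + T)]) = s' t"
      by (rule decode_and_forward_correct[where sel = snd and E = E2
          and y = "src_rx ?enc s E1" and y' = "src_rx ?enc' s' E2"])
        (use assms that R block_relay_encode in auto)
    ultimately show ?thesis by (simp only:)
  qed
  then show ?thesis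
    unfolding achievable_code_def Let_def
    using source_encode_in_vecs relay_encode_in_vecs append_in_vecs \<open>0 < p\<close> by simp
qed

lemma achievable_rate_pair_decode_and_forward:
  assumes "a1 + b1 = T" and "k1 + N1 \<le> a1 + 1" and "l1 + N3 \<le> b1 + 1"
    and "a2 + b2 = T" and "k2 + N2 \<le> a2 + 1" and "l2 + N3 \<le> b2 + 1"
  shows "achievable_rate_pair N1 N2 N3 T
     (real (A * l1 * k1) /
        real (max (A * (a1 + 1) * l1) (max (B * (a2 + 1) * l2) (A * (b1 + 1) * k1 + B * (b2 + 1) * k2))))
     (real (B * l2 * k2) /
        real (max (A * (a1 + 1) * l1) (max (B * (a2 + 1) * l2) (A * (b1 + 1) * k1 + B * (b2 + 1) * k2))))"
proof -
  obtain p :: nat where p: "prime p" "T < p" using bigger_prime by blast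
  have lengths: "Suc a1 * (A * l1) = A * (a1 + 1) * l1" "Suc a2 * (B * l2) = B * (a2 + 1) * l2"
    "Suc b1 * (A * k1) + Suc b2 * (B * k2) = A * (b1 + 1) * k1 + B * (b2 + 1) * k2"
    by (simp_all add: algebra_simps)
  note code = achievable_code_decode_and_forward[where K = "A * l1 * k1" and kA = k1 and w = "A * l1"
      and kB = l1 and v = "A * k1" and K' = "B * l2 * k2" and kA' = k2 and w' = "B * l2" and kB' = l2
      and v' = "B * k2", OF p assms(1) _ _ _ _ assms(4), unfolded lengths]
  have "finite (carrier (zmod_ring p))" by (simp add: zmod_ring_def)
  then show ?thesis
    unfolding achievable_rate_pair_def using field_zmod_ring[OF p(1)] code assms by fastforce
qed

theorem lemma8:
  fixes N1 N2 N3 T T1 T2 A B :: nat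
  assumes "N1 \<ge> N2" and "T \<ge> N1 + N3"
    and "is_tmax T N1 N3 T1" and "is_tmax T N2 N3 T2"
    and "A > 0" and "B > 0"
  shows "achievable_rate_pair N1 N2 N3 T
     (real (A * (T - T1 + 1 - N3) * (T1 + 1 - N1)) /
        real (max (A * (T1 + 1) * (T - T1 + 1 - N3))
               (max (B * (T2 + 1) * (T - T2 + 1 - N3))
                    (A * (T - T1 + 1) * (T1 + 1 - N1) + B * (T - T2 + 1) * (T2 + 1 - N2)))))
     (real (B * (T - T2 + 1 - N3) * (T2 + 1 - N2)) /
        real (max (A * (T1 + 1) * (T - T1 + 1 - N3))
               (max (B * (T2 + 1) * (T - T2 + 1 - N3))
                    (A * (T - T1 + 1) * (T1 + 1 - N1) + B * (T - T2 + 1) * (T2 + 1 - N2)))))"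
proof -
  txt \<open>Only the ranges of the maximizers matter: the scheme works for every split of the delay.\<close>
  have "N1 \<le> T1" "T1 \<le> T - N3" "N2 \<le> T2" "T2 \<le> T - N3"
    using assms(3,4) by (auto simp: is_tmax_def)
  then show ?thesis
    by (intro achievable_rate_pair_decode_and_forward) (use assms(2) in arith)+
qed

end
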